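(* Let $n \in\mathbb N$ and $F\colon\mathbb R_+^n \to \mathbb R_+$. If $F$ is amenable and there exists $c>0$ such that $F(\mathbf a)\in [c,2c]$ for all $\mathbf a \in\mathbb R_+^n \setminus \{(0,\dots,0)\}$, then $F\in P_{BM}^n$.
   Context: $\mathbb R_+=[0,\infty)$. $F$ is amenable if $F(\mathbf x)=0\iff\mathbf x=(0,\dots,0)$. A b-metric on $X$ is $d\colon X^2\to\mathbb R_+$ with $d(x,y)=0\iff x=y$, $d(x,y)=d(y,x)$, and for some $K\geqslant1$, $d(x,z)\leqslant K(d(x,y)+d(y,z))$ for all $x,y,z$; a metric is a b-metric with $K=1$. $P^n_{BM}$ is the set of $F\colon\mathbb R_+^n\to\mathbb R_+$ such that for every collection of b-metric spaces $(X_i,d_i)$, $i=1,\dots,n$ (arbitrary constants), the function $D(\mathbf x,\mathbf y)=F(d_1(x_1,y_1),\dots,d_n(x_n,y_n))$ on $\prod_{i=1}^nX_i$ is a metric. *)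

theory Defs
  imports Main "HOL.Real"
begin

text \<open>Points of R_+^n are represented as real lists of length n with nonnegative entries.\<close>
definition Rplus_vec :: "nat \<Rightarrow> real list set" where
  "Rplus_vec n = {a. length a = n \<and> (\<forall>x\<in>set a. 0 \<le> x)}"

definition bmetric_with :: "'a set \<Rightarrow> ('a \<Rightarrow> 'a \<Rightarrow> real) \<Rightarrow> real \<Rightarrow> bool" where
  "bmetric_with X d K \<longleftrightarrow>
     1 \<le> K \<and>
     (\<forall>x\<in>X. \<forall>y\<in>X. 0 \<le> d x y \<and> (d x y = 0 \<longleftrightarrow> x = y) \<and> d x y = d y x) \<and>
     (\<forall>x\<in>X. \<forall>y\<in>X. \<forall>z\<in>X. d x z \<le> K * (d x y + d y z))"

definition bmetric_on :: "'a set \<Rightarrow> ('a \<Rightarrow> 'a \<Rightarrow> real) \<Rightarrow> bool" where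
  "bmetric_on X d \<longleftrightarrow> (\<exists>K. bmetric_with X d K)"

definition metric_on :: "'a set \<Rightarrow> ('a \<Rightarrow> 'a \<Rightarrow> real) \<Rightarrow> bool" where
  "metric_on X d \<longleftrightarrow> bmetric_with X d 1"

definition amenable :: "nat \<Rightarrow> (real list \<Rightarrow> real) \<Rightarrow> bool" where
  "amenable n F \<longleftrightarrow> (\<forall>a\<in>Rplus_vec n. F a = 0 \<longleftrightarrow> a = replicate n 0)"

definition prod_space :: "nat \<Rightarrow> (nat \<Rightarrow> 'a set) \<Rightarrow> 'a list set" where
  "prod_space n X = {x. length x = n \<and> (\<forall>i<n. x ! i \<in> X i)}"

definition induced_fun :: "nat \<Rightarrow> (real list \<Rightarrow> real) \<Rightarrow> (nat \<Rightarrow> 'a \<Rightarrow> 'a \<Rightarrow> real)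
    \<Rightarrow> 'a list \<Rightarrow> 'a list \<Rightarrow> real" where
  "induced_fun n F d x y = F (map (\<lambda>i. d i (x ! i) (y ! i)) [0..<n])"

text \<open>P^n_BM, relative to the ambient type 'a of the points (the theorem quantifies over all types).\<close>
definition P_BM :: "'a itself \<Rightarrow> nat \<Rightarrow> (real list \<Rightarrow> real) \<Rightarrow> bool" where
  "P_BM _ n F \<longleftrightarrow>
     (\<forall>a\<in>Rplus_vec n. 0 \<le> F a) \<and>
     (\<forall>(X :: nat \<Rightarrow> 'a set) (d :: nat \<Rightarrow> 'a \<Rightarrow> 'a \<Rightarrow> real).
        (\<forall>i<n. bmetric_on (X i) (d i)) \<longrightarrow>
        metric_on (prod_space n X) (induced_fun n F d))"

end

theory Submission
  imports Defs
begin

text \<open>A symmetric function that vanishes exactly on the diagonal and takes its off-diagonal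
  values in \<open>[c, 2c]\<close> satisfies the triangle inequality: for pairwise distinct points,
  \<open>D x z \<le> 2c \<le> D x y + D y z\<close>. The function induced by \<open>F\<close> is of this kind, because the
  vector of coordinate distances of two points is zero exactly when they coincide.\<close>

lemma metric_on_if_off_diagonal_between:
  fixes D :: "'a \<Rightarrow> 'a \<Rightarrow> real"
  assumes "c > 0"
    and diag: "\<forall>x\<in>S. D x x = 0"
    and sym: "\<forall>x\<in>S. \<forall>y\<in>S. D x y = D y x"
    and between: "\<forall>x\<in>S. \<forall>y\<in>S. x \<noteq> y \<longrightarrow> c \<le> D x y \<and> D x y \<le> 2 * c"
  shows "metric_on S D"
proof -
  have pos: "D x y > 0" if "x \<in> S" "y \<in> S" "x \<noteq> y" for x y
    using between that \<open>c > 0\<close> by fastforce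
  have nonneg: "D x y \<ge> 0" if "x \<in> S" "y \<in> S" for x y
    using pos[OF that] diag that by (cases "x = y") auto
  have triangle: "D x z \<le> D x y + D y z" if "x \<in> S" "y \<in> S" "z \<in> S" for x y z
  proof (cases "x = y \<or> y = z \<or> x = z")
    case True
    then show ?thesis using diag nonneg that by fastforce
  next
    case False
    then have "D x z \<le> 2 * c" "c \<le> D x y" "c \<le> D y z"
      using between that by auto
    then show ?thesis by linarith
  qed
  show ?thesis
    unfolding metric_on_def bmetric_with_def
    using diag sym nonneg triangle pos by (metis less_irrefl mult_1 order.refl)
qed

definition dist_vec :: "nat \<Rightarrow> (nat \<Rightarrow> 'a \<Rightarrow> 'a \<Rightarrow> real) \<Rightarrow> 'a list \<Rightarrow> 'a list \<Rightarrow> real list" where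
  "dist_vec n d x y = map (\<lambda>i. d i (x ! i) (y ! i)) [0..<n]"

lemma induced_fun_eq_dist_vec: "induced_fun n F d x y = F (dist_vec n d x y)"
  unfolding induced_fun_def dist_vec_def ..

context
  fixes n :: nat and X :: "nat \<Rightarrow> 'a set" and d :: "nat \<Rightarrow> 'a \<Rightarrow> 'a \<Rightarrow> real"
  assumes bmetric: "\<forall>i<n. bmetric_on (X i) (d i)"
begin

lemma bmetric_factor:
  assumes "i < n" "x \<in> prod_space n X" "y \<in> prod_space n X"
  shows "0 \<le> d i (x ! i) (y ! i)"
    and "d i (x ! i) (y ! i) = 0 \<longleftrightarrow> x ! i = y ! i"
    and "d i (x ! i) (y ! i) = d i (y ! i) (x ! i)"
proof -
  obtain K where "bmetric_with (X i) (d i) K"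
    using bmetric \<open>i < n\<close> unfolding bmetric_on_def by blast
  moreover have "x ! i \<in> X i" "y ! i \<in> X i"
    using assms unfolding prod_space_def by auto
  ultimately show "0 \<le> d i (x ! i) (y ! i)"
    and "d i (x ! i) (y ! i) = 0 \<longleftrightarrow> x ! i = y ! i"
    and "d i (x ! i) (y ! i) = d i (y ! i) (x ! i)"
    unfolding bmetric_with_def by blast+
qed

lemma dist_vec_in_Rplus_vec:
  assumes "x \<in> prod_space n X" "y \<in> prod_space n X"
  shows "dist_vec n d x y \<in> Rplus_vec n"
  using bmetric_factor(1)[OF _ assms] unfolding Rplus_vec_def dist_vec_def by auto

lemma dist_vec_eq_zero_iff:
  assumes "x \<in> prod_space n X" "y \<in> prod_space n X"
  shows "dist_vec n d x y = replicate n 0 \<longleftrightarrow> x = y"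
proof -
  have "dist_vec n d x y = replicate n 0 \<longleftrightarrow> (\<forall>i<n. x ! i = y ! i)"
    using bmetric_factor(2)[OF _ assms] by (auto simp: dist_vec_def list_eq_iff_nth_eq)
  also have "\<dots> \<longleftrightarrow> x = y"
    using assms unfolding prod_space_def by (auto simp: list_eq_iff_nth_eq)
  finally show ?thesis .
qed

lemma dist_vec_commute:
  assumes "x \<in> prod_space n X" "y \<in> prod_space n X"
  shows "dist_vec n d x y = dist_vec n d y x"
  using bmetric_factor(3)[OF _ assms] unfolding dist_vec_def by simp

end

theorem corollary3p2:
  fixes n :: nat and F :: "real list \<Rightarrow> real"
  assumes "\<forall>a\<in>Rplus_vec n. 0 \<le> F a"
    and "amenable n F"
    and "\<exists>c>0. \<forall>a\<in>Rplus_vec n. a \<noteq> replicate n 0 \<longrightarrow> c \<le> F a \<and> F a \<le> 2 * c"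
  shows "P_BM TYPE('a) n F"
proof -
  obtain c where "c > 0"
    and c: "\<forall>a\<in>Rplus_vec n. a \<noteq> replicate n 0 \<longrightarrow> c \<le> F a \<and> F a \<le> 2 * c"
    using assms(3) by blast
  have "metric_on (prod_space n X) (induced_fun n F d)"
    if bmetric: "\<forall>i<n. bmetric_on (X i) (d i)" for X :: "nat \<Rightarrow> 'a set" and d
    unfolding induced_fun_eq_dist_vec
  proof (rule metric_on_if_off_diagonal_between[OF \<open>c > 0\<close>], safe)
    fix x y assume xy: "x \<in> prod_space n X" "y \<in> prod_space n X"
    note in_Rplus = dist_vec_in_Rplus_vec[OF bmetric xy]
      and eq_zero = dist_vec_eq_zero_iff[OF bmetric xy]
    show "F (dist_vec n d x y) = F (dist_vec n d y x)"
      using dist_vec_commute[OF bmetric xy] by simp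
    show "c \<le> F (dist_vec n d x y)" "F (dist_vec n d x y) \<le> 2 * c" if "x \<noteq> y"
      using c in_Rplus eq_zero that by blast+
  next
    fix x assume "x \<in> prod_space n X"
    then show "F (dist_vec n d x x) = 0"
      using assms(2) dist_vec_in_Rplus_vec[OF bmetric] dist_vec_eq_zero_iff[OF bmetric]
      unfolding amenable_def by blast
  qed
  then show ?thesis unfolding P_BM_def using assms(1) by blast
qed

end
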